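(* Let $a,b\in\Sigma_d$ and let $p\in\mathbb R^d_+$ satisfy $\min(a_i,b_i)\le p_i\le\max(a_i,b_i)$ for all $1\le i\le d$. Let $c=p/\sum_ip_i\in\Sigma_d$. Then $\max(\|a-c\|_1,\|b-c\|_1)\le\|a-b\|_1$.
   Context: $\Sigma_d=\{p\in\mathbb R^d_+:\sum_ip_i=1\}$ is the probability simplex; $\|\cdot\|_1$ is the $\ell_1$ norm. *)

theory Defs
  imports "HOL-Analysis.Analysis"
begin

definition prob_simplex :: "(real ^ 'd) set" where
  "prob_simplex = {p. (\<forall>i. p $ i \<ge> 0) \<and> (\<Sum>i\<in>UNIV. p $ i) = 1}"

definition l1norm :: "real ^ 'd \<Rightarrow> real" where
  "l1norm x = (\<Sum>i\<in>UNIV. \<bar>x $ i\<bar>)"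

end

theory Submission
  imports Defs
begin

text \<open>By the triangle inequality, \<open>\<parallel>a - c\<parallel>\<^sub>1 \<le> \<parallel>a - p\<parallel>\<^sub>1 + \<parallel>p - c\<parallel>\<^sub>1\<close>, and normalising a
  nonnegative vector moves it by \<open>\<bar>\<Sum>p - 1\<bar> = \<bar>\<Sum>(a - p)\<bar>\<close>. Since each \<open>a\<^sub>i - p\<^sub>i\<close> lies
  between \<open>0\<close> and \<open>a\<^sub>i - b\<^sub>i\<close>, the positive and the negative parts of \<open>a - p\<close> are each dominated
  by those of \<open>a - b\<close>, which both have mass \<open>\<parallel>a - b\<parallel>\<^sub>1 / 2\<close> because \<open>\<Sum>(a - b) = 0\<close>; and
  \<open>\<parallel>y\<parallel>\<^sub>1 + \<bar>\<Sum>y\<bar>\<close> is twice the larger of the two parts of \<open>y\<close>.\<close>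

lemma l1norm_diff_commute: "l1norm (x - y) = l1norm (y - x)"
  unfolding l1norm_def by (simp add: abs_minus_commute)

lemma l1norm_diff_triangle: "l1norm (x - z) \<le> l1norm (x - y) + l1norm (y - z)"
  unfolding l1norm_def
  by (simp add: sum.distrib[symmetric] sum_mono abs_triangle_ineq[where a="x $ i - y $ i" for i, simplified])

text \<open>An inequality rather than an equation because of the zero vector, where \<open>1 / 0 = 0\<close>.\<close>
lemma l1norm_diff_normalize_le:
  fixes p :: "real ^ 'd"
  assumes nonneg: "\<forall>i. p $ i \<ge> 0"
  shows "l1norm (p - (1 / (\<Sum>i\<in>UNIV. p $ i)) *\<^sub>R p) \<le> \<bar>(\<Sum>i\<in>UNIV. p $ i) - 1\<bar>"
proof -
  define S where "S = (\<Sum>i\<in>UNIV. p $ i)"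
  have "S \<ge> 0" unfolding S_def using nonneg by (simp add: sum_nonneg)
  show ?thesis
  proof (cases "S = 0")
    case True
    then have "\<forall>i\<in>UNIV. p $ i = 0"
      unfolding S_def using nonneg by (subst sum_nonneg_eq_0_iff[symmetric]) auto
    then show ?thesis by (simp add: l1norm_def)
  next
    case False
    with \<open>S \<ge> 0\<close> have "S > 0" by simp
    have "l1norm (p - (1 / S) *\<^sub>R p) = (\<Sum>i\<in>UNIV. p $ i * \<bar>1 - 1 / S\<bar>)"
      unfolding l1norm_def
    proof (rule sum.cong)
      fix i
      have "p $ i - p $ i / S = p $ i * (1 - 1 / S)" by (simp add: algebra_simps)
      then show "\<bar>(p - (1 / S) *\<^sub>R p) $ i\<bar> = p $ i * \<bar>1 - 1 / S\<bar>"
        using nonneg by (simp add: abs_mult)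
    qed simp
    also have "\<dots> = S * \<bar>1 - 1 / S\<bar>" unfolding S_def by (simp add: sum_distrib_right)
    also have "\<dots> = \<bar>S - 1\<bar>" using \<open>S > 0\<close> by (simp add: abs_if field_simps)
    finally show ?thesis unfolding S_def by simp
  qed
qed

lemma l1norm_add_abs_sum_le:
  fixes x y :: "real ^ 'd"
  assumes balanced: "(\<Sum>i\<in>UNIV. x $ i) = 0"
    and between: "\<forall>i. min 0 (x $ i) \<le> y $ i \<and> y $ i \<le> max 0 (x $ i)"
  shows "l1norm y + \<bar>\<Sum>i\<in>UNIV. y $ i\<bar> \<le> l1norm x"
proof -
  define pos where "pos z i = max (z $ i) 0" for z :: "real ^ 'd" and i
  define neg where "neg z i = max (- z $ i) 0" for z :: "real ^ 'd" and i
  have l1norm_parts: "l1norm z = sum (pos z) UNIV + sum (neg z) UNIV" for z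
    unfolding l1norm_def pos_def neg_def sum.distrib[symmetric] by (intro sum.cong) auto
  have sum_parts: "(\<Sum>i\<in>UNIV. z $ i) = sum (pos z) UNIV - sum (neg z) UNIV" for z
    unfolding pos_def neg_def sum_subtractf[symmetric] by (intro sum.cong) auto
  have "pos y i \<le> pos x i" "neg y i \<le> neg x i" for i
    using between[rule_format, of i] unfolding pos_def neg_def by auto
  then have "sum (pos y) UNIV \<le> sum (pos x) UNIV" "sum (neg y) UNIV \<le> sum (neg x) UNIV"
    by (auto intro: sum_mono)
  then show ?thesis
    using l1norm_parts[of x] l1norm_parts[of y] sum_parts[of x] sum_parts[of y] balanced
    by linarith
qed

lemma l1norm_diff_normalize_between_le:
  fixes a b p :: "real ^ 'd"
  assumes sum_a: "(\<Sum>i\<in>UNIV. a $ i) = 1" and sum_b: "(\<Sum>i\<in>UNIV. b $ i) = 1"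
    and nonneg: "\<forall>i. p $ i \<ge> 0"
    and between: "\<forall>i. min (a $ i) (b $ i) \<le> p $ i \<and> p $ i \<le> max (a $ i) (b $ i)"
  shows "l1norm (a - (1 / (\<Sum>i\<in>UNIV. p $ i)) *\<^sub>R p) \<le> l1norm (a - b)"
proof -
  let ?c = "(1 / (\<Sum>i\<in>UNIV. p $ i)) *\<^sub>R p"
  have balanced: "(\<Sum>i\<in>UNIV. (a - b) $ i) = 0"
    using sum_a sum_b by (simp add: sum_subtractf)
  have between_diff: "min 0 ((a - b) $ i) \<le> (a - p) $ i \<and> (a - p) $ i \<le> max 0 ((a - b) $ i)" for i
    using between[rule_format, of i] by (simp add: min_def max_def split: if_splits)
  have "l1norm (a - p) + \<bar>\<Sum>i\<in>UNIV. (a - p) $ i\<bar> \<le> l1norm (a - b)"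
    using between_diff by (intro l1norm_add_abs_sum_le[OF balanced]) blast
  moreover have "\<bar>\<Sum>i\<in>UNIV. (a - p) $ i\<bar> = \<bar>(\<Sum>i\<in>UNIV. p $ i) - 1\<bar>"
    using sum_a by (simp add: sum_subtractf)
  ultimately show ?thesis
    using l1norm_diff_triangle[of a ?c p] l1norm_diff_normalize_le[OF nonneg] by linarith
qed

theorem lemma5:
  fixes a b p :: "real ^ 'd"
  assumes "a \<in> prob_simplex" and "b \<in> prob_simplex"
    and "\<forall>i. p $ i \<ge> 0"
    and "\<forall>i. min (a $ i) (b $ i) \<le> p $ i \<and> p $ i \<le> max (a $ i) (b $ i)"
  defines "c \<equiv> (1 / (\<Sum>i\<in>UNIV. p $ i)) *\<^sub>R p"
  shows "max (l1norm (a - c)) (l1norm (b - c)) \<le> l1norm (a - b)"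
proof -
  have sum_a: "(\<Sum>i\<in>UNIV. a $ i) = 1" and sum_b: "(\<Sum>i\<in>UNIV. b $ i) = 1"
    using assms(1,2) by (auto simp: prob_simplex_def)
  have "l1norm (a - c) \<le> l1norm (a - b)"
    unfolding c_def by (rule l1norm_diff_normalize_between_le[OF sum_a sum_b assms(3,4)])
  moreover have "l1norm (b - c) \<le> l1norm (b - a)"
    unfolding c_def using assms(4)
    by (intro l1norm_diff_normalize_between_le[OF sum_b sum_a assms(3)]) (simp add: min.commute max.commute)
  ultimately show ?thesis by (simp add: l1norm_diff_commute[of b a])
qed

end
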